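(* Let $\mathsf S$ be a finite-dimensional system such that the composite $\mathsf S\odot\mathsf S$ admits a state $\Phi$ that is pure, symmetric under exchange of the two subsystems, and preparationally faithful. Then, for $\mathbb F=\mathbb R,\mathbb C$: - the linear space of transformations is full, $\mathfrak T_{\mathbb F}(\mathsf S)=\mathrm{Lin}(\mathfrak E_{\mathbb F}(\mathsf S))$ (all linear maps on $\mathfrak E_{\mathbb F}(\mathsf S)$); - $\mathfrak S_{\mathbb F}(\mathsf S\odot\mathsf S)=\mathfrak S_{\mathbb F}(\mathsf S)\otimes\mathfrak S_{\mathbb F}(\mathsf S)$; - $\mathfrak E_{\mathbb F}(\mathsf S\odot\mathsf S)=\mathfrak E_{\mathbb F}(\mathsf S)\otimes\mathfrak E_{\mathbb F}(\mathsf S)$.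
   Context: Single system $\mathsf S$. There is a real vector space $\mathfrak E_{\mathbb R}(\mathsf S)$ spanned by a convex cone $\mathfrak E_+(\mathsf S)$ of effects, with deterministic effect $e$. The state cone $\mathfrak S_+(\mathsf S)$ is the dual cone of $\mathfrak E_+$ (no-restriction hypothesis: states and effects are dual cones). The states are $\mathfrak S=\{\omega\in\mathfrak S_+:\omega(e)=1\}$. Transformations form a convex cone $\mathfrak T_+(\mathsf S)$ of linear maps on $\mathfrak E_{\mathbb R}$, written $a\mapsto a\circ\mathcal A$, acting on states by $(\mathcal A\omega)(a)=\omega(a\circ\mathcal A)$. The subscripts $\mathbb R,\mathbb C$ denote real and complex linear spans of the cones, and finite-dimensional means these spans are finite-dimensional. A pure state spans an extremal ray of the state cone. Composite systems. $\mathsf S\odot\mathsf S$ is again a system with its own cones of effects, states and transformations. It contains local effects $(a,b)=a\otimes b$ and local transformations $(\mathcal A,\mathcal B)$, which commute across subsystems. One has $\mathfrak Z_{\mathbb F}(\mathsf S)\otimes\mathfrak Z_{\mathbb F}(\mathsf S)\subseteq\mathfrak Z_{\mathbb F}(\mathsf S\odot\mathsf S)$ for $\mathfrak Z=\mathfrak E,\mathfrak S,\mathfrak T$. For a bipartite state $\Phi$ and transformations, $((\mathcal A,\mathcal B)\Phi)(E)=\Phi(E\circ(\mathcal A,\mathcal B))$. A bipartite state $\Phi$ is preparationally faithful (with respect to the first subsystem) if every bipartite state $\Psi$ can be written $\Psi=(\mathcal T_\Psi,\mathcal I)\Phi$ for some $\mathcal T_\Psi\in\mathfrak T_+(\mathsf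 S)$. It is symmetric if $\Phi(a,b)=\Phi(b,a)$ on local effects, i.e. it is invariant under swapping the subsystems. *)

theory Defs
  imports "HOL-Analysis.Analysis"
begin

text \<open>
  A system with coordinate type 'n has real effect space E_R = real^'n
  (the span of the effect cone), states/functionals are represented by
  vectors w acting as a \<mapsto> w \<bullet> a, and transformations are matrices
  M acting on effects by a \<mapsto> a \<circ> M = M *v a.
\<close>

definition dual_cone :: "('a::real_inner) set \<Rightarrow> 'a set" where
  "dual_cone C = {w. \<forall>a\<in>C. 0 \<le> w \<bullet> a}"

definition states :: "('a::real_inner) set \<Rightarrow> 'a \<Rightarrow> 'a set" where
  "states E e = {w \<in> dual_cone E. w \<bullet> e = 1}"

definition extremal_ray :: "('a::real_vector) set \<Rightarrow> 'a \<Rightarrow> bool" where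
  "extremal_ray C x \<longleftrightarrow> x \<in> C \<and> x \<noteq> 0 \<and>
     (\<forall>y z. y \<in> C \<longrightarrow> z \<in> C \<longrightarrow> y + z = x \<longrightarrow> (\<exists>c\<ge>0. y = c *\<^sub>R x))"

definition pure_state :: "('a::real_inner) set \<Rightarrow> 'a \<Rightarrow> 'a \<Rightarrow> bool" where
  "pure_state E e w \<longleftrightarrow> w \<in> states E e \<and> extremal_ray (dual_cone E) w"

definition opt_system :: "(real^'n) set \<Rightarrow> real^'n \<Rightarrow> (real^'n^'n) set \<Rightarrow> bool" where
  "opt_system E e T \<longleftrightarrow>
     convex_cone E \<and> span E = UNIV \<and> e \<in> E \<and>
     (\<forall>a. (\<forall>w\<in>states E e. w \<bullet> a = 0) \<longrightarrow> a = 0) \<and>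
     convex_cone T \<and> mat 1 \<in> T \<and> (\<forall>A\<in>T. \<forall>B\<in>T. A ** B \<in> T) \<and>
     (\<forall>A\<in>T. \<forall>a\<in>E. A *v a \<in> E)"

text \<open>A bilinear map f whose linear extension to the tensor product is injective,
  i.e. it realises Z(S) \<otimes> Z(S) \<subseteq> Z(S\<odot>S).\<close>

definition tensor_embedding ::
  "('a::euclidean_space \<Rightarrow> 'a \<Rightarrow> 'c::real_vector) \<Rightarrow> bool" where
  "tensor_embedding f \<longleftrightarrow> bilinear f \<and>
     (\<forall>c. (\<Sum>u\<in>Basis. \<Sum>v\<in>Basis. c u v *\<^sub>R f u v) = 0 \<longrightarrow>
          (\<forall>u\<in>Basis. \<forall>v\<in>Basis. c u v = 0))"

text \<open>The composite S \<odot> S (system with effect cone E2, deterministic effect e2,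
  transformations T2) with local effects loc a b = (a,b), product states
  locS w v = w \<otimes> v and local transformations locT A B = (A,B).\<close>

definition opt_composite ::
  "(real^'n) set \<Rightarrow> real^'n \<Rightarrow> (real^'n^'n) set \<Rightarrow>
   (real^'k) set \<Rightarrow> real^'k \<Rightarrow> (real^'k^'k) set \<Rightarrow>
   (real^'n \<Rightarrow> real^'n \<Rightarrow> real^'k) \<Rightarrow>
   (real^'n \<Rightarrow> real^'n \<Rightarrow> real^'k) \<Rightarrow>
   (real^'n^'n \<Rightarrow> real^'n^'n \<Rightarrow> real^'k^'k) \<Rightarrow> bool" where
  "opt_composite E e T E2 e2 T2 loc locS locT \<longleftrightarrow>
     opt_system E e T \<and> opt_system E2 e2 T2 \<and>
     tensor_embedding loc \<and> (\<forall>a\<in>E. \<forall>b\<in>E. loc a b \<in> E2) \<and> e2 = loc e e \<and>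
     bilinear locS \<and> (\<forall>w v a b. locS w v \<bullet> loc a b = (w \<bullet> a) * (v \<bullet> b)) \<and>
     (\<forall>w\<in>dual_cone E. \<forall>v\<in>dual_cone E. locS w v \<in> dual_cone E2) \<and>
     tensor_embedding locT \<and> (\<forall>A\<in>T. \<forall>B\<in>T. locT A B \<in> T2) \<and>
     (\<forall>A B a b. locT A B *v loc a b = loc (A *v a) (B *v b)) \<and>
     (\<forall>A B. locT A (mat 1) ** locT (mat 1) B = locT A B \<and>
            locT (mat 1) B ** locT A (mat 1) = locT A B)"

definition symmetric_state ::
  "(real^'n \<Rightarrow> real^'n \<Rightarrow> real^'k) \<Rightarrow> real^'k \<Rightarrow> bool" where
  "symmetric_state loc \<Phi> \<longleftrightarrow> (\<forall>a b. \<Phi> \<bullet> loc a b = \<Phi> \<bullet> loc b a)"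

text \<open>Preparationally faithful w.r.t. the first subsystem:
  every bipartite state \<Psi> equals (T_\<Psi>, I)\<Phi>, i.e. \<Psi>(X) = \<Phi>(X \<circ> (T_\<Psi>, I)).\<close>

definition prep_faithful ::
  "(real^'k) set \<Rightarrow> real^'k \<Rightarrow> (real^'n^'n) set \<Rightarrow>
   (real^'n^'n \<Rightarrow> real^'n^'n \<Rightarrow> real^'k^'k) \<Rightarrow> real^'k \<Rightarrow> bool" where
  "prep_faithful E2 e2 T locT \<Phi> \<longleftrightarrow>
     (\<forall>\<Psi>\<in>states E2 e2. \<exists>Tm\<in>T. \<forall>X. \<Psi> \<bullet> X = \<Phi> \<bullet> (locT Tm (mat 1) *v X))"

definition cvec :: "real^'k \<Rightarrow> complex^'k" where
  "cvec v = (\<chi> i. complex_of_real (v $ i))"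

definition cmat :: "real^'n^'n \<Rightarrow> complex^'n^'n" where
  "cmat M = (\<chi> i j. complex_of_real (M $ i $ j))"

definition cvspan :: "(complex^'k) set \<Rightarrow> (complex^'k) set" where
  "cvspan S = module.span (\<lambda>c v. c *s v) S"

definition cmspan :: "(complex^'n^'n) set \<Rightarrow> (complex^'n^'n) set" where
  "cmspan S = module.span (\<lambda>c M. \<chi> i. c *s (M $ i)) S"

end

theory Submission
  imports Defs
begin

text \<open>
  Preparational faithfulness writes every state of \<open>S \<odot> S\<close> as \<open>\<Phi> \<circ> (A, I)\<close> with \<open>A\<close> a
  transformation of \<open>S\<close>, so the state space of \<open>S \<odot> S\<close> is a linear image of the span of
  the transformations, whose dimension is at most \<open>dim Lin(E(S)) = n\<^sup>2\<close>. Conversely the local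
  effects \<open>a \<otimes> b\<close>, and the product states dual to them, are linearly independent, so
  \<open>n\<^sup>2\<close> is also a lower bound for the dimension of the composite. Hence all these
  dimensions coincide, every inclusion is an equality, and complexification preserves
  spanning sets.
\<close>

lemma span_UNIV_if_separating:
  fixes S :: "'a::euclidean_space set"
  assumes "\<And>a. (\<forall>w\<in>S. w \<bullet> a = 0) \<Longrightarrow> a = 0"
  shows "span S = UNIV"
proof (rule ccontr)
  assume "span S \<noteq> UNIV"
  then obtain a where "a \<noteq> 0" "\<forall>x\<in>span S. a \<bullet> x = 0"
    using span_not_UNIV_orthogonal by blast
  then show False
    using assms span_base by (metis inner_commute)
qed

lemma opt_system_span_states:
  assumes "opt_system E e T"
  shows "span (states E e) = UNIV"
  using assms by (intro span_UNIV_if_separating) (auto simp: opt_system_def)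

lemma opt_system_span_dual_cone:
  assumes "opt_system E e T"
  shows "span (dual_cone E) = UNIV"
proof -
  have "states E e \<subseteq> dual_cone E"
    by (auto simp: states_def)
  then show ?thesis
    using opt_system_span_states[OF assms] span_mono by blast
qed

lemma bilinear_span_products_subset:
  assumes f: "bilinear f" and a: "a \<in> span A" and b: "b \<in> span B"
  shows "f a b \<in> span {f x y | x y. x \<in> A \<and> y \<in> B}"
proof -
  let ?P = "{f x y | x y. x \<in> A \<and> y \<in> B}"
  have lin_left: "linear (\<lambda>x. f x y)" and lin_right: "linear (f x)" for x y
    using f by (auto simp: bilinear_def)
  have left: "f a y \<in> span ?P" if "y \<in> B" for y
  proof -
    have "f a y \<in> span ((\<lambda>x. f x y) ` A)"
      using a span_linear_image[OF lin_left] by blast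
    also have "\<dots> \<subseteq> span ?P"
      by (rule span_mono) (use that in blast)
    finally show ?thesis .
  qed
  have "f a b \<in> span (f a ` B)"
    using b span_linear_image[OF lin_right] by blast
  also have "\<dots> \<subseteq> span ?P"
    using left by (intro span_minimal) auto
  finally show ?thesis .
qed

lemma bilinear_span_products_UNIV:
  fixes f :: "'a::euclidean_space \<Rightarrow> 'b::euclidean_space \<Rightarrow> 'c::euclidean_space"
  assumes "bilinear f" "span A = UNIV" "span B = UNIV"
    and "span {f u v | u v. u \<in> Basis \<and> v \<in> Basis} = UNIV"
  shows "span {f a b | a b. a \<in> A \<and> b \<in> B} = UNIV"
proof -
  have "{f u v | u v. u \<in> Basis \<and> v \<in> Basis} \<subseteq> span {f a b | a b. a \<in> A \<and> b \<in> B}"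
    using bilinear_span_products_subset[OF assms(1)] assms(2,3) by blast
  then have "span {f u v | u v. u \<in> Basis \<and> v \<in> Basis} \<subseteq> span {f a b | a b. a \<in> A \<and> b \<in> B}"
    by (rule span_minimal) simp
  then show ?thesis
    using assms(4) by blast
qed

lemma tensor_embedding_if_dual:
  fixes f g :: "'a::euclidean_space \<Rightarrow> 'a \<Rightarrow> 'c::real_inner"
  assumes "bilinear g" and dual: "\<And>w v a b. g w v \<bullet> f a b = (w \<bullet> a) * (v \<bullet> b)"
  shows "tensor_embedding g"
  unfolding tensor_embedding_def
proof (intro conjI assms allI impI ballI)
  fix c :: "'a \<Rightarrow> 'a \<Rightarrow> real" and u0 v0 :: 'a
  assume zero: "(\<Sum>u\<in>Basis. \<Sum>v\<in>Basis. c u v *\<^sub>R g u v) = 0"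
    and u0: "u0 \<in> Basis" and v0: "v0 \<in> Basis"
  have "0 = (\<Sum>u\<in>Basis. \<Sum>v\<in>Basis. c u v *\<^sub>R g u v) \<bullet> f u0 v0"
    using zero by simp
  also have "\<dots> = (\<Sum>u\<in>Basis. \<Sum>v\<in>Basis. c u v * ((u \<bullet> u0) * (v \<bullet> v0)))"
    by (simp add: inner_sum_left dual)
  also have "\<dots> = c u0 v0"
    using u0 v0 by (simp add: inner_Basis mult_delta_right)
  finally show "c u0 v0 = 0" by simp
qed

lemma dim_tensor_embedding_Basis_products:
  fixes f :: "real^'n \<Rightarrow> real^'n \<Rightarrow> 'c::euclidean_space"
  assumes "tensor_embedding f"
  shows "DIM(real^'n^'n) \<le> dim {f u v | u v. u \<in> Basis \<and> v \<in> Basis}"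
proof -
  let ?P = "{f u v | u v. u \<in> Basis \<and> v \<in> Basis}"
  \<comment> \<open>A matrix \<open>M\<close> encodes the tensor \<open>\<Sum> M\<^sub>i\<^sub>j e\<^sub>i \<otimes> e\<^sub>j\<close>; \<open>G\<close> is the linear extension of \<open>f\<close>.\<close>
  define G where "G M = (\<Sum>u\<in>Basis. \<Sum>v\<in>Basis. (u \<bullet> (M *v v)) *\<^sub>R f u v)"
    for M :: "real^'n^'n"
  have lin: "linear G"
    by (rule linearI) (simp_all add: G_def matrix_vector_mult_add_rdistrib inner_add_right
        scaleR_add_left sum.distrib scaleR_matrix_vector_assoc[symmetric] scaleR_sum_right)
  have "M = 0" if "G M = 0" for M
  proof -
    have "\<forall>u\<in>Basis. \<forall>v\<in>Basis. u \<bullet> (M *v v) = 0"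
      using assms that unfolding tensor_embedding_def G_def
      by (blast dest: spec[where x = "\<lambda>u v. u \<bullet> (M *v v)"])
    moreover have "M $ i $ j = axis i 1 \<bullet> (M *v axis j 1)" for i j
      by (simp add: inner_axis' matrix_vector_mult_basis column_def)
    ultimately show "M = 0"
      by (simp add: vec_eq_iff Basis_vec_def)
  qed
  then have "inj G"
    using lin linear_injective_0 by blast
  then have "dim (range G) = DIM(real^'n^'n)"
    using dim_image_eq[OF lin, of UNIV] by (simp add: inj_on_def inj_def)
  moreover have "G M \<in> span ?P" for M
    unfolding G_def by (intro span_sum span_scale span_base) blast
  then have "dim (range G) \<le> dim ?P"
    using dim_subset[of "range G" "span ?P"] dim_span by auto
  ultimately show ?thesis by simp
qed

lemma prep_faithful_dim_le:
  fixes locT :: "real^'n^'n \<Rightarrow> real^'n^'n \<Rightarrow> real^'k^'k"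
  assumes "span (states E2 e2) = UNIV" and lin: "linear (\<lambda>A. locT A (mat 1))"
    and "prep_faithful E2 e2 T locT \<Phi>"
  shows "DIM(real^'k) \<le> dim T"
proof -
  define L where "L A = \<Phi> v* locT A (mat 1)" for A
  have "linear (\<lambda>M::real^'k^'k. \<Phi> v* M)"
    by (rule linearI) (simp_all add: vector_matrix_mult_add_rdistrib vector_scaleR_matrix_ac)
  then have linL: "linear L"
    using linear_compose[OF lin] unfolding L_def comp_def by blast
  have "states E2 e2 \<subseteq> L ` T"
  proof
    fix \<Psi> assume "\<Psi> \<in> states E2 e2"
    then obtain A where "A \<in> T" and \<Psi>: "\<And>X. \<Psi> \<bullet> X = \<Phi> \<bullet> (locT A (mat 1) *v X)"
      using assms(3) unfolding prep_faithful_def by blast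
    have "\<Psi> = L A"
      by (rule euclidean_eqI) (simp add: \<Psi> L_def dot_lmul_matrix)
    with \<open>A \<in> T\<close> show "\<Psi> \<in> L ` T" by blast
  qed
  then have "(UNIV :: (real^'k) set) \<subseteq> L ` span T"
    using span_mono assms(1) span_linear_image[OF linL] by metis
  then have "DIM(real^'k) \<le> dim (L ` span T)"
    using dim_subset dim_UNIV by metis
  also have "\<dots> \<le> dim T"
    using dim_image_le[OF linL] dim_span by metis
  finally show ?thesis .
qed

lemma cvec_0 [simp]: "cvec 0 = 0"
  and cvec_add [simp]: "cvec (x + y) = cvec x + cvec y"
  and cvec_scaleR [simp]: "cvec (c *\<^sub>R x) = complex_of_real c *s cvec x"
  by (simp_all add: cvec_def vec_eq_iff)

lemma cvspan_cvec_UNIV: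
  fixes S :: "(real^'k) set"
  assumes "span S = UNIV"
  shows "cvspan (cvec ` S) = UNIV"
proof -
  have "subspace {y. cvec y \<in> vec.span (cvec ` S)}"
    unfolding subspace_def by (auto simp: vec.span_zero vec.span_add vec.span_scale)
  then have real_part: "cvec y \<in> vec.span (cvec ` S)" for y
    using span_induct[of y S "\<lambda>y. cvec y \<in> vec.span (cvec ` S)"] assms
    by (auto intro: vec.span_base)
  have "x \<in> vec.span (cvec ` S)" for x :: "complex^'k"
  proof -
    have "x = (\<Sum>i\<in>UNIV. (x $ i) *s cvec (axis i 1))"
      by (simp add: vec_eq_iff cvec_def axis_def if_distrib cong: if_cong)
    also have "\<dots> \<in> vec.span (cvec ` S)"
      by (intro vec.span_sum vec.span_scale real_part)
    finally show ?thesis .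
  qed
  then show ?thesis
    unfolding cvspan_def by auto
qed

lemma cmat_0 [simp]: "cmat 0 = 0"
  and cmat_add [simp]: "cmat (x + y) = cmat x + cmat y"
  and cmat_scaleR [simp]: "cmat (c *\<^sub>R x) = (\<chi> i. complex_of_real c *s (cmat x $ i))"
  by (simp_all add: cmat_def vec_eq_iff)

interpretation matrix_cscale: module "\<lambda>c (M::complex^'n^'n). \<chi> i. c *s (M $ i)"
  by unfold_locales (simp_all add: vec_eq_iff algebra_simps)

lemma cmspan_cmat_UNIV:
  fixes S :: "(real^'n^'n) set"
  assumes "span S = UNIV"
  shows "cmspan (cmat ` S) = UNIV"
proof -
  let ?scale = "\<lambda>c (M::complex^'n^'n). \<chi> i. c *s (M $ i)"
  have "subspace {y. cmat y \<in> matrix_cscale.span (cmat ` S)}"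
    unfolding subspace_def
    by (auto simp: matrix_cscale.span_zero matrix_cscale.span_add matrix_cscale.span_scale)
  then have real_part: "cmat y \<in> matrix_cscale.span (cmat ` S)" for y
    using span_induct[of y S "\<lambda>y. cmat y \<in> matrix_cscale.span (cmat ` S)"] assms
    by (auto intro: matrix_cscale.span_base)
  have "x \<in> matrix_cscale.span (cmat ` S)" for x :: "complex^'n^'n"
  proof -
    have "cmat (axis i (axis j 1)) $ a $ b = (if a = i then if b = j then 1 else 0 else 0)"
      for i j a b :: 'n
      by (simp add: cmat_def axis_def)
    then have "x = (\<Sum>i\<in>UNIV. \<Sum>j\<in>UNIV. ?scale (x $ i $ j) (cmat (axis i (axis j 1))))"
      by (simp add: vec_eq_iff mult_delta_right sum.If_cases)
    also have "\<dots> \<in> matrix_cscale.span (cmat ` S)"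
      by (intro matrix_cscale.span_sum matrix_cscale.span_scale real_part)
    finally show ?thesis .
  qed
  then show ?thesis
    unfolding cmspan_def by auto
qed

lemma opt_composite_prep_faithful_spans:
  fixes T :: "(real^'n^'n) set" and E2 :: "(real^'k) set"
  assumes comp: "opt_composite E e T E2 e2 T2 loc locS locT"
    and "prep_faithful E2 e2 T locT \<Phi>"
  shows "span T = UNIV"
    and "span {loc u v | u v. u \<in> Basis \<and> v \<in> Basis} = UNIV"
    and "span {locS u v | u v. u \<in> Basis \<and> v \<in> Basis} = UNIV"
proof -
  let ?B = "{loc u v | u v. u \<in> Basis \<and> v \<in> Basis}"
  let ?BS = "{locS u v | u v. u \<in> Basis \<and> v \<in> Basis}"
  have "opt_system E2 e2 T2" "tensor_embedding loc" "tensor_embedding locT"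
    "bilinear locS" "\<And>w v a b. locS w v \<bullet> loc a b = (w \<bullet> a) * (v \<bullet> b)"
    using comp unfolding opt_composite_def by blast+
  then have "tensor_embedding locS"
    by (intro tensor_embedding_if_dual)
  have "linear (\<lambda>A. locT A (mat 1))"
    using \<open>tensor_embedding locT\<close> by (simp add: tensor_embedding_def bilinear_def)
  have "DIM(real^'k) \<le> dim T"
    using opt_system_span_states[OF \<open>opt_system E2 e2 T2\<close>] \<open>linear _\<close> assms(2)
    by (rule prep_faithful_dim_le)
  moreover have "DIM(real^'n^'n) \<le> dim ?B" "DIM(real^'n^'n) \<le> dim ?BS"
    using dim_tensor_embedding_Basis_products \<open>tensor_embedding loc\<close>
      \<open>tensor_embedding locS\<close> by blast+
  moreover have "dim T \<le> DIM(real^'n^'n)" "dim ?B \<le> DIM(real^'k)" "dim ?BS \<le> DIM(real^'k)"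
    by (rule dim_subset_UNIV)+
  ultimately have "dim T = DIM(real^'n^'n)" "dim ?B = DIM(real^'k)" "dim ?BS = DIM(real^'k)"
    by linarith+
  then show "span T = UNIV" "span ?B = UNIV" "span ?BS = UNIV"
    using dim_eq_full by blast+
qed

theorem mainTheorem7:
  fixes E :: "(real^'n) set" and e :: "real^'n" and T :: "(real^'n^'n) set"
    and E2 :: "(real^'k) set" and e2 :: "real^'k" and T2 :: "(real^'k^'k) set"
    and loc :: "real^'n \<Rightarrow> real^'n \<Rightarrow> real^'k"
    and locS :: "real^'n \<Rightarrow> real^'n \<Rightarrow> real^'k"
    and locT :: "real^'n^'n \<Rightarrow> real^'n^'n \<Rightarrow> real^'k^'k"
    and \<Phi> :: "real^'k"
  assumes "opt_composite E e T E2 e2 T2 loc locS locT"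
    and "pure_state E2 e2 \<Phi>"
    and "symmetric_state loc \<Phi>"
    and "prep_faithful E2 e2 T locT \<Phi>"
  shows "span T = UNIV \<and>
         span (dual_cone E2) = span {locS w v | w v. w \<in> dual_cone E \<and> v \<in> dual_cone E} \<and>
         span E2 = span {loc a b | a b. a \<in> E \<and> b \<in> E} \<and>
         cmspan (cmat ` T) = UNIV \<and>
         cvspan (cvec ` dual_cone E2) =
           cvspan {cvec (locS w v) | w v. w \<in> dual_cone E \<and> v \<in> dual_cone E} \<and>
         cvspan (cvec ` E2) = cvspan {cvec (loc a b) | a b. a \<in> E \<and> b \<in> E}"
proof -
  have sys: "opt_system E e T" "opt_system E2 e2 T2" and "bilinear locS"
    and "tensor_embedding loc"
    using assms(1) unfolding opt_composite_def by blast+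
  then have "bilinear loc"
    by (simp add: tensor_embedding_def)
  note spans = opt_composite_prep_faithful_spans[OF assms(1,4)]
  have spanE: "span {loc a b | a b. a \<in> E \<and> b \<in> E} = UNIV"
    using \<open>bilinear loc\<close> _ _ spans(2) by (rule bilinear_span_products_UNIV)
      (use sys(1) in \<open>simp_all add: opt_system_def\<close>)
  have spanS: "span {locS w v | w v. w \<in> dual_cone E \<and> v \<in> dual_cone E} = UNIV"
    using \<open>bilinear locS\<close> opt_system_span_dual_cone[OF sys(1)] opt_system_span_dual_cone[OF sys(1)]
      spans(3) by (rule bilinear_span_products_UNIV)
  have spanE2: "span E2 = UNIV" and spanS2: "span (dual_cone E2) = UNIV"
    using sys(2) opt_system_span_dual_cone by (auto simp: opt_system_def)
  have "{cvec (loc a b) | a b. a \<in> E \<and> b \<in> E} = cvec ` {loc a b | a b. a \<in> E \<and> b \<in> E}"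
    "{cvec (locS w v) | w v. w \<in> dual_cone E \<and> v \<in> dual_cone E} =
       cvec ` {locS w v | w v. w \<in> dual_cone E \<and> v \<in> dual_cone E}"
    by blast+
  then show ?thesis
    using spans(1) spanS2 spanS spanE2 spanE
    by (simp add: cmspan_cmat_UNIV cvspan_cvec_UNIV)
qed

end
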